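(* Let $R$ be a CSNC ring. Then $2\in\mathrm{Nil}(R)$ and $J(R)\subseteq\mathrm{Nil}(R)$ (i.e. the Jacobson radical $J(R)$ is nil).
   Context: All rings are associative with identity $1$. For a ring $R$, $\mathrm{Id}(R)$, $U(R)$, $\mathrm{Nil}(R)$ denote the sets of idempotents, units and nilpotent elements, and $J(R)$ the Jacobson radical. An element $a\in R$ is clean if $a=e+u$ for some $e\in\mathrm{Id}(R)$, $u\in U(R)$. An element $a$ is strongly nil-clean if $a=e+q$ with $e\in \mathrm{Id}(R)$, $q\in\mathrm{Nil}(R)$ and $eq=qe$. A ring $R$ is called CSNC if every clean element of $R$ is strongly nil-clean. *)

theory Defs
  imports Main
begin

definition idempotents :: "'a::ring_1 set" where
  "idempotents = {e. e * e = e}"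

definition units_of_ring :: "'a::ring_1 set" where
  "units_of_ring = {u. \<exists>v. u * v = 1 \<and> v * u = 1}"

definition nilpotents :: "'a::ring_1 set" where
  "nilpotents = {q. \<exists>n::nat. q ^ n = 0}"

definition is_clean :: "'a::ring_1 \<Rightarrow> bool" where
  "is_clean a \<longleftrightarrow> (\<exists>e u. e \<in> idempotents \<and> u \<in> units_of_ring \<and> a = e + u)"

definition strongly_nil_clean :: "'a::ring_1 \<Rightarrow> bool" where
  "strongly_nil_clean a \<longleftrightarrow>
     (\<exists>e q. e \<in> idempotents \<and> q \<in> nilpotents \<and> e * q = q * e \<and> a = e + q)"

definition CSNC :: "'a::ring_1 itself \<Rightarrow> bool" where
  "CSNC _ \<longleftrightarrow> (\<forall>a::'a. is_clean a \<longrightarrow> strongly_nil_clean a)"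

definition left_ideal :: "'a::ring_1 set \<Rightarrow> bool" where
  "left_ideal I \<longleftrightarrow> 0 \<in> I \<and> (\<forall>x\<in>I. \<forall>y\<in>I. x + y \<in> I) \<and> (\<forall>x\<in>I. - x \<in> I)
     \<and> (\<forall>r. \<forall>x\<in>I. r * x \<in> I)"

definition maximal_left_ideal :: "'a::ring_1 set \<Rightarrow> bool" where
  "maximal_left_ideal M \<longleftrightarrow> left_ideal M \<and> M \<noteq> UNIV \<and>
     (\<forall>I. left_ideal I \<and> M \<subseteq> I \<longrightarrow> I = M \<or> I = UNIV)"

definition jacobson_radical :: "'a::ring_1 set" where
  "jacobson_radical = \<Inter> {M. maximal_left_ideal M}"

end

theory Submission
  imports Defs
begin

text \<open>Every unit u is clean (u = 0 + u), so in a CSNC ring u = e + q with e idempotent and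
  q nilpotent commuting with e. The idempotent f = 1 - e satisfies f = q f v for the inverse
  v of u, hence f = q^n f v^n = 0, and u - 1 = q is nilpotent. Applying this to the unit -1
  shows that 2 is nilpotent; applying it to 1 + j, which is a unit for every j in the Jacobson
  radical, shows that j is nilpotent.\<close>

lemma eq_zero_if_eq_nilpotent_sandwich:
  fixes x q v :: "'a::ring_1"
  assumes x: "x = q * x * v" and q: "q \<in> nilpotents"
  shows "x = 0"
proof -
  have x_pow: "x = q ^ n * x * v ^ n" for n
  proof (induction n)
    case 0
    show ?case by simp
  next
    case (Suc n)
    have "x = q ^ n * (q * x * v) * v ^ n" using Suc x by simp
    also have "\<dots> = q ^ Suc n * x * v ^ Suc n"
      by (simp only: mult.assoc power_Suc2[of q n] power_Suc[of v n])
    finally show ?case .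
  qed
  obtain n where "q ^ n = 0" using q by (auto simp: nilpotents_def)
  with x_pow[of n] show ?thesis by simp
qed

lemma unit_strongly_nil_clean_imp_minus_one_nilpotent:
  fixes u :: "'a::ring_1"
  assumes u: "u \<in> units_of_ring" and snc: "strongly_nil_clean u"
  shows "u - 1 \<in> nilpotents"
proof -
  obtain v where uv: "u * v = 1" using u by (auto simp: units_of_ring_def)
  obtain e q where e: "e * e = e" and q: "q \<in> nilpotents" and eq: "e * q = q * e"
    and u_eq: "u = e + q"
    using snc by (auto simp: strongly_nil_clean_def idempotents_def)
  define f where "f = 1 - e"
  have "f * u = q * f"
    using e eq by (simp add: f_def u_eq algebra_simps)
  then have "f = q * f * v"
    using uv by (metis mult.assoc mult.right_neutral)
  then have "f = 0"
    using q by (rule eq_zero_if_eq_nilpotent_sandwich)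
  then have "u - 1 = q"
    by (simp add: f_def u_eq)
  with q show ?thesis by simp
qed

lemma CSNC_unit_minus_one_nilpotent:
  fixes u :: "'a::ring_1"
  assumes "CSNC TYPE('a)" and u: "u \<in> units_of_ring"
  shows "u - 1 \<in> nilpotents"
proof -
  have "is_clean u"
    unfolding is_clean_def using u by (intro exI[of _ 0] exI[of _ u]) (simp add: idempotents_def)
  with assms have "strongly_nil_clean u"
    by (simp add: CSNC_def)
  with u show ?thesis
    by (rule unit_strongly_nil_clean_imp_minus_one_nilpotent)
qed

lemma uminus_nilpotent:
  fixes q :: "'a::ring_1"
  assumes "q \<in> nilpotents"
  shows "- q \<in> nilpotents"
proof -
  obtain n where "q ^ n = 0" using assms by (auto simp: nilpotents_def)
  then have "(- q) ^ n = 0" by (simp add: power_minus[of q])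
  then show ?thesis by (auto simp: nilpotents_def)
qed

lemma left_ideal_eq_UNIV_if_one:
  fixes I :: "'a::ring_1 set"
  assumes "left_ideal I" and "1 \<in> I"
  shows "I = UNIV"
proof -
  have "r * 1 \<in> I" for r using assms unfolding left_ideal_def by blast
  then show ?thesis by auto
qed

lemma left_ideal_principal: "left_ideal {r * a | r. True}"
  unfolding left_ideal_def
proof (intro conjI ballI allI)
  show "0 \<in> {r * a |r. True}" by (rule CollectI, rule exI[of _ 0]) simp
next
  fix x y assume "x \<in> {r * a |r. True}" "y \<in> {r * a |r. True}"
  then obtain b c where "x = b * a" "y = c * a" by blast
  then have "x + y = (b + c) * a" by (simp add: distrib_right)
  then show "x + y \<in> {r * a |r. True}" by blast
next
  fix x assume "x \<in> {r * a |r. True}"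
  then obtain b where "x = b * a" by blast
  then have "- x = (- b) * a" by simp
  then show "- x \<in> {r * a |r. True}" by blast
next
  fix r x assume "x \<in> {r * a |r. True}"
  then obtain b where "x = b * a" by blast
  then have "r * x = (r * b) * a" by (simp add: mult.assoc)
  then show "r * x \<in> {r * a |r. True}" by blast
qed

lemma left_ideal_Union_chain:
  fixes C :: "'a::ring_1 set set"
  assumes "C \<noteq> {}" and chain: "subset.chain {I. left_ideal I} C"
  shows "left_ideal (\<Union>C)"
proof -
  have ideal: "left_ideal I" if "I \<in> C" for I
    using chain that by (auto simp: subset_chain_def)
  have upper: "\<exists>I\<in>C. x \<in> I \<and> y \<in> I" if "x \<in> \<Union>C" "y \<in> \<Union>C" for x y
  proof -
    from that obtain X Y where XY: "X \<in> C" "Y \<in> C" "x \<in> X" "y \<in> Y"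
      by (auto simp only: Union_iff)
    then have "X \<subseteq> Y \<or> Y \<subseteq> X" using chain by (auto simp: subset_chain_def)
    with XY show ?thesis by blast
  qed
  show ?thesis
    unfolding left_ideal_def
  proof (intro conjI ballI allI)
    obtain I where "I \<in> C" using assms(1) by blast
    then show "0 \<in> \<Union>C" using ideal by (auto simp: left_ideal_def)
  next
    fix x y assume "x \<in> \<Union>C" "y \<in> \<Union>C"
    then obtain I where "I \<in> C" "x \<in> I" "y \<in> I" using upper by blast
    then show "x + y \<in> \<Union>C" using ideal[of I] by (auto simp: left_ideal_def)
  next
    fix x assume "x \<in> \<Union>C"
    then obtain I where "I \<in> C" "x \<in> I" by blast
    then show "- x \<in> \<Union>C" using ideal[of I] by (auto simp: left_ideal_def)
  next
    fix r x assume "x \<in> \<Union>C"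
    then obtain I where "I \<in> C" "x \<in> I" by blast
    then show "r * x \<in> \<Union>C" using ideal[of I] unfolding left_ideal_def by blast
  qed
qed

lemma maximal_left_ideal_exists:
  fixes L :: "'a::ring_1 set"
  assumes L: "left_ideal L" "1 \<notin> L"
  obtains M where "maximal_left_ideal M" and "L \<subseteq> M"
proof -
  define A where "A = {I. left_ideal I \<and> L \<subseteq> I \<and> (1::'a) \<notin> I}"
  have "\<Union>C \<in> A" if C: "C \<noteq> {}" "subset.chain A C" for C
  proof -
    have "subset.chain {I. left_ideal I} C"
      using C(2) by (auto simp: subset_chain_def A_def)
    with C(1) have "left_ideal (\<Union>C)" by (rule left_ideal_Union_chain)
    with C show ?thesis by (auto simp: A_def subset_chain_def)
  qed
  moreover have "A \<noteq> {}" using L by (auto simp: A_def)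
  ultimately obtain M where M: "M \<in> A" and M_max: "\<forall>X\<in>A. M \<subseteq> X \<longrightarrow> X = M"
    using subset_Zorn_nonempty[of A] by blast
  have "maximal_left_ideal M"
    unfolding maximal_left_ideal_def
  proof (intro conjI allI impI)
    show "left_ideal M" and "M \<noteq> UNIV" using M by (auto simp: A_def)
  next
    fix I assume I: "left_ideal I \<and> M \<subseteq> I"
    show "I = M \<or> I = UNIV"
    proof (cases "1 \<in> I")
      case True
      then show ?thesis using I left_ideal_eq_UNIV_if_one by blast
    next
      case False
      then have "I \<in> A" using I M by (auto simp: A_def)
      then show ?thesis using M_max I by blast
    qed
  qed
  moreover have "L \<subseteq> M" using M by (simp add: A_def)
  ultimately show ?thesis by (rule that)
qed

lemma jacobson_radical_mult_left:
  fixes j :: "'a::ring_1"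
  assumes "j \<in> jacobson_radical"
  shows "r * j \<in> jacobson_radical"
  unfolding jacobson_radical_def
proof (rule InterI)
  fix M :: "'a set"
  assume "M \<in> {M. maximal_left_ideal M}"
  then have "left_ideal M" and "j \<in> M"
    using assms by (auto simp: maximal_left_ideal_def jacobson_radical_def)
  then show "r * j \<in> M" unfolding left_ideal_def by blast
qed

lemma jacobson_radical_one_plus_left_invertible:
  fixes j :: "'a::ring_1"
  assumes j: "j \<in> jacobson_radical"
  obtains a where "a * (1 + j) = 1"
proof (rule ccontr)
  assume no_inverse: "\<not> thesis"
  define L where "L = {r * (1 + j) | r. True}"
  have "1 \<notin> L" using no_inverse that by (auto simp: L_def)
  with left_ideal_principal obtain M where M: "maximal_left_ideal M" "L \<subseteq> M"
    unfolding L_def by (blast intro: maximal_left_ideal_exists)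
  then have ideal: "left_ideal M" by (simp add: maximal_left_ideal_def)
  have "1 * (1 + j) \<in> L" unfolding L_def by blast
  then have "1 + j \<in> M" using M(2) by auto
  moreover have "j \<in> M" using j M(1) by (auto simp: jacobson_radical_def)
  ultimately have "(1 + j) + - j \<in> M" using ideal unfolding left_ideal_def by blast
  then have "M = UNIV" using ideal left_ideal_eq_UNIV_if_one by simp
  then show False using M(1) by (simp add: maximal_left_ideal_def)
qed

text \<open>A left inverse a of 1 + j is itself of the form 1 + (-a) j with (-a) j in the radical,
  hence has a left inverse b; then b = b a (1 + j) = 1 + j, so a is also a right inverse.\<close>

lemma jacobson_radical_one_plus_unit:
  fixes j :: "'a::ring_1"
  assumes j: "j \<in> jacobson_radical"
  shows "1 + j \<in> units_of_ring"
proof -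
  obtain a where a: "a * (1 + j) = 1"
    using j by (rule jacobson_radical_one_plus_left_invertible)
  then have a_eq: "a = 1 + (- a) * j"
    by (simp add: algebra_simps)
  have "(- a) * j \<in> jacobson_radical"
    using j by (rule jacobson_radical_mult_left)
  then obtain b where "b * (1 + (- a) * j) = 1"
    by (rule jacobson_radical_one_plus_left_invertible)
  then have b: "b * a = 1" using a_eq by simp
  have "b = b * (a * (1 + j))" using a by simp
  also have "\<dots> = 1 + j" using b by (simp add: mult.assoc[symmetric])
  finally have "(1 + j) * a = 1" using b by simp
  with a show ?thesis by (auto simp: units_of_ring_def)
qed

theorem proposition2p3:
  assumes "CSNC TYPE('a::ring_1)"
  shows "(2::'a) \<in> nilpotents \<and> (jacobson_radical :: 'a set) \<subseteq> nilpotents"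
proof
  have "(-1::'a) \<in> units_of_ring"
    by (auto simp: units_of_ring_def intro!: exI[of _ "-1"])
  then have "(-1 - 1::'a) \<in> nilpotents"
    using assms by (intro CSNC_unit_minus_one_nilpotent)
  then have "- (-1 - 1::'a) \<in> nilpotents"
    by (rule uminus_nilpotent)
  then show "(2::'a) \<in> nilpotents" by simp
next
  show "(jacobson_radical :: 'a set) \<subseteq> nilpotents"
  proof
    fix j :: 'a
    assume "j \<in> jacobson_radical"
    then have "(1 + j) - 1 \<in> nilpotents"
      using assms by (intro CSNC_unit_minus_one_nilpotent jacobson_radical_one_plus_unit)
    then show "j \<in> nilpotents" by simp
  qed
qed

end
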